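(* Fix $n\in\mathbb N$. The measures $\{\mathbf P^n_x\}_{x\in\mathbb Z_{\ge0}}$ can be coupled on a common probability space, with coordinate processes $(S^x_k)_{k=0}^n$ of law $\mathbf P^n_x$, in such a way that almost surely $|S^{x+1}_k-S^x_k|=1$ for all $x\ge0$ and all $0\le k\le n$. In particular, for all $x,y\ge0$, $\sup_{k\le n}|S^x_k-S^y_k|\le|x-y|$ almost surely.
   Context: $\mathbf P^n_x$ is the uniform probability measure on the finite set of paths $(s_0,\dots,s_n)\in\mathbb Z_{\ge0}^{n+1}$ with $s_0=x$ and $|s_{i+1}-s_i|=1$ for all $i$ (simple symmetric random walk conditioned to stay non-negative up to time $n$). *)

theory Defs
  imports "HOL-Probability.Probability"
begin

definition nonneg_paths :: "nat \<Rightarrow> int \<Rightarrow> int list set" where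
  "nonneg_paths n x = {s. length s = Suc n \<and> s ! 0 = x \<and> (\<forall>i\<le>n. 0 \<le> s ! i)
      \<and> (\<forall>i<n. \<bar>s ! Suc i - s ! i\<bar> = 1)}"

definition Pn :: "nat \<Rightarrow> int \<Rightarrow> int list pmf" where
  "Pn n x = pmf_of_set (nonneg_paths n x)"

end

theory Submission
  imports Defs
begin

text \<open>Write \<open>N m y\<close> for the number of non-negative paths of length m started at y.
  Under \<open>Pn (m + 1) y\<close> the first step goes up with probability
  \<open>N m (y + 1) / (N m (y + 1) + N m (y - 1))\<close>, and the path then continues with law
  \<open>Pn m (y \<plusminus> 1)\<close>. Since \<open>N m\<close> is non-decreasing and concave in y,
  \<open>N m (y + 2) * N m (y - 1) \<le> N m (y + 1) * N m y\<close>, so this probability is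
  non-increasing in y. The first steps from y and y + 1 can therefore be coupled so that
  the upper walk goes up only if the lower one does; in each of the three resulting cases
  the tails start from adjacent heights, and induction on m couples \<open>Pn m y\<close> with
  \<open>Pn m (y + 1)\<close> so that the two paths differ by exactly 1 at every time. Gluing these
  couplings along \<open>x = 0, \<dots>, n\<close> gives a joint law; for \<open>x \<ge> n\<close> the walk cannot
  reach 0, so \<open>Pn n x\<close> is a vertical translate of \<open>Pn n n\<close> and the family is
  continued by shifts.\<close>

lemma nonneg_paths_neg: "y < 0 \<Longrightarrow> nonneg_paths m y = {}"
  unfolding nonneg_paths_def by auto

lemma nonneg_paths_0: "nonneg_paths 0 y = (if 0 \<le> y then {[y]} else {})"
  unfolding nonneg_paths_def by (auto simp: length_Suc_conv)

lemma Cons_mem_nonneg_paths_Suc: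
  "a # t \<in> nonneg_paths (Suc m) y \<longleftrightarrow>
     a = y \<and> 0 \<le> y \<and> (t \<in> nonneg_paths m (y + 1) \<or> t \<in> nonneg_paths m (y - 1))"
proof -
  have "\<bar>t ! 0 - y\<bar> = 1 \<longleftrightarrow> t ! 0 = y + 1 \<or> t ! 0 = y - 1" by arith
  then show ?thesis
    unfolding nonneg_paths_def less_Suc_eq_le[symmetric] All_less_Suc2
    by (auto simp: less_Suc_eq_le)
qed

lemma nonneg_paths_Suc:
  assumes "0 \<le> y"
  shows "nonneg_paths (Suc m) y = Cons y ` (nonneg_paths m (y + 1) \<union> nonneg_paths m (y - 1))"
proof (intro equalityI subsetI)
  fix s assume s: "s \<in> nonneg_paths (Suc m) y"
  then obtain a t where "s = a # t"
    by (auto simp: nonneg_paths_def length_Suc_conv)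
  with s show "s \<in> Cons y ` (nonneg_paths m (y + 1) \<union> nonneg_paths m (y - 1))"
    by (auto simp: Cons_mem_nonneg_paths_Suc)
qed (use assms in \<open>auto simp: Cons_mem_nonneg_paths_Suc\<close>)

lemma finite_nonneg_paths: "finite (nonneg_paths m y)"
proof (induction m arbitrary: y)
  case (Suc m)
  then show ?case
    by (cases "0 \<le> y") (simp_all add: nonneg_paths_Suc nonneg_paths_neg)
qed (simp add: nonneg_paths_0)

lemma nonneg_paths_nonempty: "0 \<le> y \<Longrightarrow> nonneg_paths m y \<noteq> {}"
  by (induction m arbitrary: y) (simp_all add: nonneg_paths_0 nonneg_paths_Suc)

lemma nonneg_paths_disjoint: "y \<noteq> z \<Longrightarrow> nonneg_paths m y \<inter> nonneg_paths m z = {}"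
  unfolding nonneg_paths_def by auto

lemma nonneg_paths_lower_bound:
  assumes "s \<in> nonneg_paths m y" "i \<le> m"
  shows "y - int i \<le> s ! i"
  using assms(2)
proof (induction i)
  case (Suc i)
  then have "\<bar>s ! Suc i - s ! i\<bar> = 1"
    using assms(1) by (simp add: nonneg_paths_def)
  with Suc show ?case by simp
qed (use assms(1) in \<open>simp add: nonneg_paths_def\<close>)

lemma map_add_nonneg_paths:
  assumes "int m \<le> y" "0 \<le> c"
  shows "map (\<lambda>v. v + c) ` nonneg_paths m y = nonneg_paths m (y + c)"
proof (intro equalityI subsetI)
  fix t assume t: "t \<in> nonneg_paths m (y + c)"
  have "c \<le> t ! i" if "i \<le> m" for i
    using nonneg_paths_lower_bound[OF t that] that assms(1) by linarith
  then have "map (\<lambda>v. v - c) t \<in> nonneg_paths m y"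
    using t by (auto simp: nonneg_paths_def)
  moreover have "t = map (\<lambda>v. v + c) (map (\<lambda>v. v - c) t)"
    by (simp add: map_idI)
  ultimately show "t \<in> map (\<lambda>v. v + c) ` nonneg_paths m y"
    by blast
qed (use assms(2) in \<open>auto simp: nonneg_paths_def\<close>)

definition num_paths :: "nat \<Rightarrow> int \<Rightarrow> nat" where
  "num_paths m y = card (nonneg_paths m y)"

lemma num_paths_0: "num_paths 0 y = (if 0 \<le> y then 1 else 0)"
  by (simp add: num_paths_def nonneg_paths_0)

lemma num_paths_neg: "y < 0 \<Longrightarrow> num_paths m y = 0"
  by (simp add: num_paths_def nonneg_paths_neg)

lemma num_paths_pos: "0 \<le> y \<Longrightarrow> 0 < num_paths m y"
  by (simp add: num_paths_def card_gt_0_iff finite_nonneg_paths nonneg_paths_nonempty)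

lemma num_paths_Suc:
  assumes "0 \<le> y"
  shows "num_paths (Suc m) y = num_paths m (y + 1) + num_paths m (y - 1)"
  unfolding num_paths_def nonneg_paths_Suc[OF assms]
  by (simp add: card_image card_Un_disjoint finite_nonneg_paths nonneg_paths_disjoint)

lemma num_paths_mono: "-1 \<le> y \<Longrightarrow> num_paths m y \<le> num_paths m (y + 1)"
proof (induction m arbitrary: y)
  case (Suc m)
  show ?case
  proof (cases "y = -1")
    case False
    with Suc.prems have "0 \<le> y" by simp
    with Suc.IH[of "y - 1"] Suc.IH[of "y + 1"] show ?thesis
      by (simp add: num_paths_Suc add.assoc)
  qed (simp add: num_paths_neg)
qed (simp add: num_paths_0)

lemma num_paths_concave:
  "-1 \<le> y \<Longrightarrow> num_paths m y + num_paths m (y + 2) \<le> 2 * num_paths m (y + 1)"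
proof (induction m arbitrary: y)
  case (Suc m)
  show ?case
  proof (cases "y = -1")
    case True
    with Suc.IH[of 0] show ?thesis
      by (simp add: num_paths_Suc num_paths_neg)
  next
    case False
    with Suc.prems have "0 \<le> y" by simp
    with Suc.IH[of "y - 1"] Suc.IH[of "y + 1"] show ?thesis
      by (simp add: num_paths_Suc algebra_simps)
  qed
qed (simp add: num_paths_0)

lemma mult_le_mult_of_concave:
  fixes a b c d :: "'a::linordered_idom"
  assumes "0 \<le> a" "a \<le> b" "b \<le> c" "a + c \<le> 2 * b" "b + d \<le> 2 * c"
  shows "a * d \<le> b * c"
proof -
  have "a * d \<le> a * (2 * c - b)"
    using assms by (intro mult_left_mono) auto
  also have "\<dots> \<le> a * c + a * (b - a)"
    using mult_left_mono[of "c - b" "b - a" a] assms by (simp add: algebra_simps)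
  also have "\<dots> \<le> b * c"
    using mult_right_mono[of a c "b - a"] assms by (simp add: algebra_simps)
  finally show ?thesis .
qed

lemma num_paths_cross_le:
  assumes "0 \<le> y"
  shows "num_paths m (y + 2) * num_paths m (y - 1) \<le> num_paths m (y + 1) * num_paths m y"
proof -
  have "int (num_paths m (y - 1)) * int (num_paths m (y + 2))
      \<le> int (num_paths m y) * int (num_paths m (y + 1))"
    using assms num_paths_mono[of "y - 1" m] num_paths_mono[of y m]
      num_paths_concave[of "y - 1" m] num_paths_concave[of y m]
    by (intro mult_le_mult_of_concave) (simp_all add: algebra_simps)
  then show ?thesis
    by (simp only: of_nat_mult[symmetric] of_nat_le_iff mult.commute)
qed

lemma pmf_of_set_Un_eq_bind_bernoulli:
  assumes "finite A" "finite B" "A \<inter> B = {}" "A \<noteq> {}"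
  shows "pmf_of_set (A \<union> B) =
    bernoulli_pmf (card A / (card A + card B)) \<bind> (\<lambda>b. if b then pmf_of_set A else pmf_of_set B)"
proof (rule pmf_eqI)
  fix x
  let ?p = "real (card A) / (card A + card B)"
  have "0 < card A"
    using assms by (simp add: card_gt_0_iff)
  then have p: "0 \<le> ?p" "?p \<le> 1" "1 - ?p = card B / (card A + card B)"
    by (simp_all add: field_simps)
  have "card (A \<union> B) = card A + card B" "real (card A) + real (card B) \<noteq> 0"
    using assms \<open>0 < card A\<close> by (simp_all add: card_Un_disjoint)
  then have "pmf (pmf_of_set (A \<union> B)) x = pmf (pmf_of_set A) x * ?p + pmf (pmf_of_set B) x * (1 - ?p)"
    using assms \<open>0 < card A\<close> p(3) by (cases "B = {}") (auto simp: indicator_def divide_simps)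
  then show "pmf (pmf_of_set (A \<union> B)) x =
      pmf (bernoulli_pmf ?p \<bind> (\<lambda>b. if b then pmf_of_set A else pmf_of_set B)) x"
    using p by (simp add: pmf_bind)
qed

lemma rel_pmf_bernoulli_mono:
  assumes "0 \<le> q" "q \<le> p" "p \<le> 1"
  shows "rel_pmf (\<lambda>u v. v \<longrightarrow> u) (bernoulli_pmf p) (bernoulli_pmf q)"
proof
  let ?W = "bernoulli_pmf p \<bind> (\<lambda>u. map_pmf (\<lambda>c. (u, u \<and> c)) (bernoulli_pmf (q / p)))"
  show "\<And>u v. (u, v) \<in> set_pmf ?W \<Longrightarrow> v \<longrightarrow> u"
    by auto
  show "map_pmf fst ?W = bernoulli_pmf p"
    by (simp add: map_bind_pmf pmf.map_comp o_def bind_return_pmf')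
  have "0 \<le> q / p" "q / p \<le> 1"
    using assms by (auto simp: divide_simps)
  show "map_pmf snd ?W = bernoulli_pmf q"
  proof (rule pmf_eqI)
    fix v
    have "map_pmf snd ?W = bernoulli_pmf p \<bind> (\<lambda>u. if u then bernoulli_pmf (q / p) else return_pmf False)"
      by (auto simp: map_bind_pmf pmf.map_comp o_def intro: bind_pmf_cong)
    then show "pmf (map_pmf snd ?W) v = pmf (bernoulli_pmf q) v"
      using assms \<open>0 \<le> q / p\<close> \<open>q / p \<le> 1\<close>
      by (cases v; cases "p = 0") (auto simp: pmf_bind field_simps)
  qed
qed

lemma rel_pmf_chain_joint:
  assumes "\<And>i. i < j \<Longrightarrow> rel_pmf R (P i) (P (Suc i))"
  shows "\<exists>G. (\<forall>L\<in>set_pmf G. length L = Suc j \<and> (\<forall>i<j. R (L ! i) (L ! Suc i)))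
             \<and> (\<forall>i\<le>j. map_pmf (\<lambda>L. L ! i) G = P i)"
  using assms
proof (induction j)
  case 0
  show ?case
    by (rule exI[of _ "map_pmf (\<lambda>a. [a]) (P 0)"]) (auto simp: pmf.map_comp o_def)
next
  case (Suc j)
  then obtain G where G: "\<forall>L\<in>set_pmf G. length L = Suc j \<and> (\<forall>i<j. R (L ! i) (L ! Suc i))"
    and marg: "\<forall>i\<le>j. map_pmf (\<lambda>L. L ! i) G = P i"
    by auto
  have "rel_pmf (=) (map_pmf (\<lambda>L. L ! j) G) (P j)"
    using marg by (simp add: rel_pmf_reflI)
  then have "rel_pmf (\<lambda>L s. L ! j = s) G (P j)"
    by (simp add: pmf.rel_map)
  then have "rel_pmf ((\<lambda>L s. L ! j = s) OO R) G (P (Suc j))"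
    using Suc.prems[of j] by (auto simp: pmf.rel_compp relcomppI)
  then obtain W where W: "\<And>L t. (L, t) \<in> set_pmf W \<Longrightarrow> R (L ! j) t"
    and W_fst: "map_pmf fst W = G" and W_snd: "map_pmf snd W = P (Suc j)"
    by (auto elim!: rel_pmf.cases)
  have W_G: "(L, t) \<in> set_pmf W \<Longrightarrow> L \<in> set_pmf G" for L t
    using W_fst by force
  define G' where "G' = map_pmf (\<lambda>(L, t). L @ [t]) W"
  have "\<forall>L\<in>set_pmf G'. length L = Suc (Suc j) \<and> (\<forall>i<Suc j. R (L ! i) (L ! Suc i))"
    using G W W_G unfolding G'_def
    by (fastforce simp: nth_append less_Suc_eq)
  moreover have "map_pmf (\<lambda>L. L ! i) G' = P i" if "i \<le> Suc j" for i
  proof (cases "i = Suc j")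
    case True
    have "map_pmf (\<lambda>L. L ! i) G' = map_pmf snd W"
      unfolding G'_def pmf.map_comp using True G W_G
      by (intro map_pmf_cong) (auto simp: nth_append)
    with True W_snd show ?thesis by simp
  next
    case False
    with that have "map_pmf (\<lambda>L. L ! i) G' = map_pmf (\<lambda>L. L ! i) (map_pmf fst W)"
      unfolding G'_def pmf.map_comp using G W_G
      by (intro map_pmf_cong) (auto simp: nth_append)
    with False that W_fst marg show ?thesis by simp
  qed
  ultimately show ?case
    by blast
qed

definition adjacent_paths :: "nat \<Rightarrow> int list \<Rightarrow> int list \<Rightarrow> bool" where
  "adjacent_paths m s t \<longleftrightarrow> (\<forall>k\<le>m. \<bar>s ! k - t ! k\<bar> = 1)"

lemma adjacent_paths_Cons:
  "\<bar>a - b\<bar> = 1 \<Longrightarrow> adjacent_paths m s t \<Longrightarrow> adjacent_paths (Suc m) (a # s) (b # t)"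
  unfolding adjacent_paths_def less_Suc_eq_le[symmetric] All_less_Suc2 by simp

lemma conversep_adjacent_paths: "(adjacent_paths m)\<inverse>\<inverse> = adjacent_paths m"
  by (auto simp: fun_eq_iff adjacent_paths_def abs_minus_commute)

lemma adjacent_paths_map_add:
  "length s = Suc m \<Longrightarrow> adjacent_paths m (map (\<lambda>v. v + c) s) (map (\<lambda>v. v + (c + 1)) s)"
  by (simp add: adjacent_paths_def)

definition up_prob :: "nat \<Rightarrow> int \<Rightarrow> real" where
  "up_prob m y = num_paths m (y + 1) / (num_paths m (y + 1) + num_paths m (y - 1))"

lemma up_prob_le_1: "0 \<le> y \<Longrightarrow> up_prob m y \<le> 1"
  using num_paths_pos[of "y + 1" m] by (simp add: up_prob_def divide_le_eq_1 add_pos_nonneg)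

lemma up_prob_0: "up_prob m 0 = 1"
  by (simp add: up_prob_def num_paths_neg num_paths_pos)

lemma up_prob_antimono:
  assumes "0 \<le> y"
  shows "up_prob m (y + 1) \<le> up_prob m y"
proof -
  have "real (num_paths m (y + 2) * num_paths m (y - 1)) \<le> num_paths m (y + 1) * num_paths m y"
    using num_paths_cross_le[OF assms] by (simp only: of_nat_le_iff)
  then show ?thesis
    using assms num_paths_pos[of "y + 1" m] num_paths_pos[of "y + 2" m]
    by (simp add: up_prob_def field_simps)
qed

lemma Pn_Suc:
  assumes "0 \<le> y"
  shows "Pn (Suc m) y =
    map_pmf (Cons y) (bernoulli_pmf (up_prob m y) \<bind> (\<lambda>b. Pn m (if b then y + 1 else y - 1)))"
proof -
  let ?U = "nonneg_paths m (y + 1) \<union> nonneg_paths m (y - 1)"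
  have "Pn (Suc m) y = map_pmf (Cons y) (pmf_of_set ?U)"
    unfolding Pn_def nonneg_paths_Suc[OF assms] using assms
    by (intro map_pmf_of_set_inj[symmetric]) (auto simp: finite_nonneg_paths nonneg_paths_nonempty)
  also have "pmf_of_set ?U = bernoulli_pmf (up_prob m y) \<bind> (\<lambda>b. Pn m (if b then y + 1 else y - 1))"
    unfolding up_prob_def num_paths_def Pn_def if_distrib[of "\<lambda>z. pmf_of_set (nonneg_paths m z)"]
    using assms by (intro pmf_of_set_Un_eq_bind_bernoulli)
      (auto simp: finite_nonneg_paths nonneg_paths_disjoint nonneg_paths_nonempty)
  finally show ?thesis .
qed

lemma Pn_shift:
  assumes "int m \<le> y" "0 \<le> c"
  shows "map_pmf (map (\<lambda>v. v + c)) (Pn m y) = Pn m (y + c)"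
  unfolding Pn_def using assms
  by (subst map_pmf_of_set_inj)
    (auto simp: map_add_nonneg_paths finite_nonneg_paths nonneg_paths_nonempty inj_on_def)

lemma rel_pmf_Pn_adjacent: "0 \<le> y \<Longrightarrow> rel_pmf (adjacent_paths m) (Pn m y) (Pn m (y + 1))"
proof (induction m arbitrary: y)
  case 0
  then show ?case
    by (simp add: Pn_def nonneg_paths_0 adjacent_paths_def pmf_of_set_singleton rel_pmf_return_pmf1)
next
  case (Suc m)
  let ?p = "up_prob m y" and ?q = "up_prob m (y + 1)"
  have "rel_pmf (\<lambda>u v. v \<longrightarrow> u) (bernoulli_pmf ?p) (bernoulli_pmf ?q)"
    using Suc.prems up_prob_antimono[of y m] up_prob_le_1[of y m]
    by (intro rel_pmf_bernoulli_mono) (simp_all add: up_prob_def)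
  then have "rel_pmf (\<lambda>u v. (v \<longrightarrow> u) \<and> u \<in> set_pmf (bernoulli_pmf ?p)) (bernoulli_pmf ?p) (bernoulli_pmf ?q)"
    by (rule pmf.rel_mono_strong) simp
  then have tails: "rel_pmf (adjacent_paths m)
      (bernoulli_pmf ?p \<bind> (\<lambda>u. Pn m (if u then y + 1 else y - 1)))
      (bernoulli_pmf ?q \<bind> (\<lambda>v. Pn m (if v then y + 1 + 1 else y + 1 - 1)))"
  proof (rule rel_pmf_bindI)
    fix u v assume uv: "(v \<longrightarrow> u) \<and> u \<in> set_pmf (bernoulli_pmf ?p)"
    consider "u" "v" | "u" "\<not> v" | "\<not> u" "\<not> v"
      using uv by blast
    then show "rel_pmf (adjacent_paths m) (Pn m (if u then y + 1 else y - 1))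
        (Pn m (if v then y + 1 + 1 else y + 1 - 1))"
    proof cases
      case 1
      have "0 \<le> y + 1"
        using Suc.prems by simp
      with 1 show ?thesis
        using Suc.IH[of "y + 1"] by (simp only: if_True)
    next
      case 2
      have "rel_pmf (adjacent_paths m)\<inverse>\<inverse> (Pn m (y + 1)) (Pn m y)"
        using Suc.IH[OF Suc.prems] by (simp only: pmf.rel_flip)
      with 2 show ?thesis
        by (simp add: conversep_adjacent_paths)
    next
      case 3
      \<comment> \<open>a down-step has positive probability only away from the boundary\<close>
      then have "y \<noteq> 0"
        using uv by (auto simp: up_prob_0 set_pmf_iff)
      with Suc.prems Suc.IH[of "y - 1"] 3 show ?thesis by simp
    qed
  qed
  have Pn_Suc_succ: "Pn (Suc m) (y + 1) = map_pmf (Cons (y + 1))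
      (bernoulli_pmf ?q \<bind> (\<lambda>v. Pn m (if v then y + 1 + 1 else y + 1 - 1)))"
    using Suc.prems by (intro Pn_Suc) simp
  show ?case
    unfolding Pn_Suc[OF Suc.prems] Pn_Suc_succ pmf.rel_map using tails
    by (rule pmf.rel_mono_strong) (auto intro: adjacent_paths_Cons)
qed

lemma abs_diff_le_of_unit_steps:
  fixes f :: "nat \<Rightarrow> 'a::linordered_idom"
  assumes steps: "\<And>x. \<bar>f (Suc x) - f x\<bar> \<le> 1"
  shows "\<bar>f x - f y\<bar> \<le> \<bar>of_nat x - of_nat y\<bar>"
proof -
  have shift: "\<bar>f (x + d) - f x\<bar> \<le> of_nat d" for x d
  proof (induction d)
    case (Suc d)
    have "\<bar>f (Suc (x + d)) - f (x + d)\<bar> \<le> 1"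
      by (rule steps)
    with Suc show ?case
      by (simp add: abs_le_iff)
  qed simp
  show ?thesis
  proof (cases "x \<le> y")
    case True
    with shift[of x "y - x"] show ?thesis
      by (simp add: abs_minus_commute)
  next
    case False
    with shift[of y "x - y"] show ?thesis
      by simp
  qed
qed

lemma set_pmf_Pn: "0 \<le> y \<Longrightarrow> set_pmf (Pn m y) = nonneg_paths m y"
  by (simp add: Pn_def finite_nonneg_paths nonneg_paths_nonempty)

lemma Pn_adjacent_family:
  obtains G :: "(nat \<Rightarrow> int list) pmf" where
    "\<And>x. map_pmf (\<lambda>\<omega>. \<omega> x) G = Pn n (int x)"
    "\<And>\<omega> x. \<omega> \<in> set_pmf G \<Longrightarrow> adjacent_paths n (\<omega> x) (\<omega> (Suc x))"
proof -
  have "rel_pmf (adjacent_paths n) (Pn n (int i)) (Pn n (int (Suc i)))" for i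
    using rel_pmf_Pn_adjacent[of "int i" n] by (simp add: add.commute)
  then obtain G0 where G0: "\<forall>L\<in>set_pmf G0. length L = Suc n \<and> (\<forall>i<n. adjacent_paths n (L ! i) (L ! Suc i))"
    and marg: "\<forall>i\<le>n. map_pmf (\<lambda>L. L ! i) G0 = Pn n (int i)"
    using rel_pmf_chain_joint[of n "adjacent_paths n" "\<lambda>i. Pn n (int i)"] by blast
  have length_last: "length (L ! n) = Suc n" if "L \<in> set_pmf G0" for L
  proof -
    have "L ! n \<in> set_pmf (map_pmf (\<lambda>L. L ! n) G0)"
      using that by simp
    then show ?thesis
      using marg by (simp add: set_pmf_Pn nonneg_paths_def)
  qed
  define extend where "extend L x = (if x < n then L ! x else map (\<lambda>v. v + int (x - n)) (L ! n))"
    for L :: "int list list" and x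
  show thesis
  proof (rule that[of "map_pmf extend G0"])
    fix x
    show "map_pmf (\<lambda>\<omega>. \<omega> x) (map_pmf extend G0) = Pn n (int x)"
    proof (cases "x < n")
      case True
      with marg show ?thesis
        by (simp add: pmf.map_comp o_def extend_def)
    next
      case False
      then have "map_pmf (\<lambda>\<omega>. \<omega> x) (map_pmf extend G0)
          = map_pmf (map (\<lambda>v. v + int (x - n))) (map_pmf (\<lambda>L. L ! n) G0)"
        by (simp add: pmf.map_comp o_def extend_def)
      also have "\<dots> = Pn n (int n + int (x - n))"
        using marg by (simp add: Pn_shift)
      finally show ?thesis
        using False by simp
    qed
  next
    fix \<omega> x assume "\<omega> \<in> set_pmf (map_pmf extend G0)"
    then obtain L where L: "L \<in> set_pmf G0" and \<omega>: "\<omega> = extend L"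
      by auto
    consider "Suc x < n" | "Suc x = n" | "n \<le> x"
      by linarith
    then show "adjacent_paths n (\<omega> x) (\<omega> (Suc x))"
    proof cases
      case 1
      with G0 L show ?thesis
        by (simp add: \<omega> extend_def)
    next
      case 2
      with G0 L have "adjacent_paths n (L ! x) (L ! n)"
        by auto
      with 2 show ?thesis
        by (simp add: \<omega> extend_def)
    next
      case 3
      then have "\<omega> x = map (\<lambda>v. v + int (x - n)) (L ! n)"
        and "\<omega> (Suc x) = map (\<lambda>v. v + (int (x - n) + 1)) (L ! n)"
        by (simp_all add: \<omega> extend_def Suc_diff_le)
      then show ?thesis
        using adjacent_paths_map_add[OF length_last[OF L]] by simp
    qed
  qed
qed

theorem propositionA5:
  fixes n :: nat
  shows "\<exists>(M :: (nat \<Rightarrow> int list) measure) (S :: nat \<Rightarrow> (nat \<Rightarrow> int list) \<Rightarrow> int list).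
     prob_space M \<and>
     (\<forall>x. S x \<in> measurable M (count_space UNIV) \<and>
          distr M (count_space UNIV) (S x) = measure_pmf (Pn n (int x))) \<and>
     (AE \<omega> in M. \<forall>x. \<forall>k\<le>n. \<bar>S (Suc x) \<omega> ! k - S x \<omega> ! k\<bar> = 1) \<and>
     (\<forall>x y. AE \<omega> in M. (MAX k\<in>{..n}. \<bar>S x \<omega> ! k - S y \<omega> ! k\<bar>) \<le> \<bar>int x - int y\<bar>)"
proof -
  obtain G where marg: "\<And>x. map_pmf (\<lambda>\<omega>. \<omega> x) G = Pn n (int x)"
    and adjacent: "\<And>\<omega> x. \<omega> \<in> set_pmf G \<Longrightarrow> adjacent_paths n (\<omega> x) (\<omega> (Suc x))"
    using Pn_adjacent_family[of n] by blast
  have distr: "distr (measure_pmf G) (count_space UNIV) (\<lambda>\<omega>. \<omega> x) = measure_pmf (Pn n (int x))" for x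
    using map_pmf_rep_eq[of "\<lambda>\<omega>. \<omega> x" G] marg[of x] by simp
  have steps: "AE \<omega> in measure_pmf G. \<forall>x. \<forall>k\<le>n. \<bar>\<omega> (Suc x) ! k - \<omega> x ! k\<bar> = 1"
    using adjacent by (auto simp: AE_measure_pmf_iff adjacent_paths_def abs_minus_commute)
  have "AE \<omega> in measure_pmf G. (MAX k\<in>{..n}. \<bar>\<omega> x ! k - \<omega> y ! k\<bar>) \<le> \<bar>int x - int y\<bar>" for x y
    using steps
  proof eventually_elim
    case (elim \<omega>)
    then have "\<bar>\<omega> x ! k - \<omega> y ! k\<bar> \<le> \<bar>int x - int y\<bar>" if "k \<le> n" for k
      using that by (intro abs_diff_le_of_unit_steps[where f = "\<lambda>x. \<omega> x ! k"]) simp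
    then show ?case
      by simp
  qed
  with distr steps show ?thesis
    by (intro exI[of _ "measure_pmf G"] exI[of _ "\<lambda>x \<omega>. \<omega> x"]) (simp add: prob_space_measure_pmf)
qed

end
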